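(* Let $D$ be a connected ribbon with $n$ boxes and $\alpha_1(D)=1$. If $c(D)>1/2+n/4$, then $\mathfrak r_D$ is not $p$-positive.
   Context: Boxes $(i,j)$ are indexed by row $i$ (top to bottom) and column $j$. A connected ribbon $D$ of composition $\alpha(D)=(\alpha_1(D),\dots,\alpha_\ell(D))$ has $\alpha_r(D)$ consecutive boxes in row $r$, with the leftmost box of row $r$ directly above the rightmost box of row $r+1$. A box $(i,j)$ of $D$ is a corner if $(i-1,j)\in D$ and $(i+1,j)\notin D$; $c(D)$ is the number of corners. $\mathfrak r_D=\sum_T x^{c(T)}$ over fillings $T$ of $D$ with letters of $\{1'<1<2'<2<\cdots\}$ having rows and columns weakly increasing, at most one unmarked $k$ per column and at most one marked $k'$ per row; $c(T)_i$ counts entries $i$ or $i'$. A symmetric function is $p$-positive if all its coefficients in the power sum basis are nonnegative. *)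

theory Defs
  imports Complex_Main
begin

text \<open>A composition: nonempty list of positive parts (row lengths, top to bottom).\<close>
definition is_composition :: "nat list \<Rightarrow> bool" where
  "is_composition \<alpha> \<longleftrightarrow> \<alpha> \<noteq> [] \<and> 0 \<notin> set \<alpha>"

text \<open>Row i (1-based, top to bottom) of the ribbon occupies columns
  ribbon_start i, ..., ribbon_start i + alpha_i - 1; the bottom row starts in column 1 and
  the leftmost box of row r lies directly above the rightmost box of row r+1.\<close>
definition ribbon_start :: "nat list \<Rightarrow> nat \<Rightarrow> nat" where
  "ribbon_start \<alpha> i = 1 + (\<Sum>r\<in>{i+1..length \<alpha>}. \<alpha> ! (r - 1) - 1)"

definition ribbon :: "nat list \<Rightarrow> (nat \<times> nat) set" where
  "ribbon \<alpha> = {(i, j). 1 \<le> i \<and> i \<le> length \<alpha> \<and>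
      ribbon_start \<alpha> i \<le> j \<and> j < ribbon_start \<alpha> i + \<alpha> ! (i - 1)}"

definition corners :: "(nat \<times> nat) set \<Rightarrow> nat" where
  "corners D = card {(i, j). (i, j) \<in> D \<and> 1 \<le> i \<and> (i - 1, j) \<in> D \<and> (i + 1, j) \<notin> D}"

text \<open>Letters 1' < 1 < 2' < 2 < ... are encoded by positive naturals:
  2k-1 encodes k' (marked), 2k encodes k (unmarked); the order is the order on nat.\<close>
definition letter :: "nat \<Rightarrow> nat" where
  "letter v = (v + 1) div 2"

definition marked_filling :: "(nat \<times> nat) set \<Rightarrow> (nat \<times> nat \<Rightarrow> nat) \<Rightarrow> bool" where
  "marked_filling D T \<longleftrightarrow>
     (\<forall>b\<in>D. 1 \<le> T b) \<and> (\<forall>b. b \<notin> D \<longrightarrow> T b = 0) \<and>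
     (\<forall>i j. (i, j) \<in> D \<and> (i, j + 1) \<in> D \<longrightarrow> T (i, j) \<le> T (i, j + 1)) \<and>
     (\<forall>i j. (i, j) \<in> D \<and> (i + 1, j) \<in> D \<longrightarrow> T (i, j) \<le> T (i + 1, j)) \<and>
     (\<forall>i i' j. (i, j) \<in> D \<and> (i', j) \<in> D \<and> i \<noteq> i' \<and> even (T (i, j)) \<longrightarrow> T (i, j) \<noteq> T (i', j)) \<and>
     (\<forall>i j j'. (i, j) \<in> D \<and> (i, j') \<in> D \<and> j \<noteq> j' \<and> odd (T (i, j)) \<longrightarrow> T (i, j) \<noteq> T (i, j'))"

definition content :: "(nat \<times> nat) set \<Rightarrow> (nat \<times> nat \<Rightarrow> nat) \<Rightarrow> nat \<Rightarrow> nat" where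
  "content D T k = card {b \<in> D. letter (T b) = k}"

text \<open>Coefficient of the monomial x^a = x_1^{a 1} x_2^{a 2} ... in r_D.\<close>
definition rcoeff :: "(nat \<times> nat) set \<Rightarrow> (nat \<Rightarrow> nat) \<Rightarrow> nat" where
  "rcoeff D a = card {T. marked_filling D T \<and> (\<forall>k\<ge>1. content D T k = a k)}"

definition is_partition :: "nat list \<Rightarrow> bool" where
  "is_partition la \<longleftrightarrow> sorted_wrt (\<ge>) la \<and> 0 \<notin> set la"

text \<open>Coefficient of x^a in p_lambda = prod_j (x_1^{lambda_j} + x_2^{lambda_j} + ...).\<close>
definition pcoeff :: "nat list \<Rightarrow> (nat \<Rightarrow> nat) \<Rightarrow> nat" where
  "pcoeff la a = card {f. length f = length la \<and> (\<forall>i\<in>set f. 1 \<le> i) \<and>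
      (\<forall>k\<ge>1. (\<Sum>j\<in>{j. j < length la \<and> f ! j = k}. la ! j) = a k)}"

text \<open>A formal power series in x_1, x_2, ... given by its monomial coefficients F
  (indexed by exponent vectors a with a 0 = 0 and finite support) is p-positive if it is
  a nonnegative (finite) linear combination of power sum symmetric functions p_lambda.\<close>
definition p_positive :: "((nat \<Rightarrow> nat) \<Rightarrow> nat) \<Rightarrow> bool" where
  "p_positive F \<longleftrightarrow> (\<exists>c :: nat list \<Rightarrow> real.
      finite {la. c la \<noteq> 0} \<and> (\<forall>la. c la \<noteq> 0 \<longrightarrow> is_partition la) \<and> (\<forall>la. 0 \<le> c la) \<and>
      (\<forall>a. a 0 = 0 \<and> finite {k. a k \<noteq> 0} \<longrightarrow>
         real (F a) = (\<Sum>la\<in>{la. c la \<noteq> 0}. c la * real (pcoeff la a))))"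

end

theory Submission
  imports Defs
begin

(* The coefficients of x\<^sub>1\<^sup>n and x\<^sub>1\<^sup>n\<^sup>-\<^sup>1 x\<^sub>2 decide the question.
   In a power sum p\<^sub>\<lambda> with |\<lambda>| = n the first is 1 and the second is the number of parts
   of \<lambda> equal to 1, at most n; so p-positivity forces
   [x\<^sub>1\<^sup>n\<^sup>-\<^sup>1 x\<^sub>2] r\<^sub>D \<le> n [x\<^sub>1\<^sup>n] r\<^sub>D.
   A filling with content x\<^sub>1\<^sup>n has to put 1' at the start of every row lying above another
   row and 1 in every other box except the bottom-left one, so [x\<^sub>1\<^sup>n] r\<^sub>D \<le> 2.
   For every corner m, writing 2' or 2 into m and either 1' or 1 into the box above m and
   into the bottom-left box gives 8 fillings of content x\<^sub>1\<^sup>n\<^sup>-\<^sup>1 x\<^sub>2; they are all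
   different, except that the bottom-left choice is lost when m is the bottom-left box.
   Hence 8c - 4 \<le> 2n, i.e. c \<le> 1/2 + n/4. *)

section \<open>Two coefficients of power sums\<close>

definition x1_pow :: "nat \<Rightarrow> nat \<Rightarrow> nat" where
  "x1_pow k = (\<lambda>i. if i = 1 then k else 0)"

definition x1_pow_x2 :: "nat \<Rightarrow> nat \<Rightarrow> nat" where
  "x1_pow_x2 k = (\<lambda>i. if i = 1 then k else if i = 2 then 1 else 0)"

lemma x1_pow_support: "x1_pow k 0 = 0" "finite {i. x1_pow k i \<noteq> 0}"
  by (simp_all add: x1_pow_def finite_subset[of _ "{1}"])

lemma x1_pow_x2_support: "x1_pow_x2 k 0 = 0" "finite {i. x1_pow_x2 k i \<noteq> 0}"
  by (simp_all add: x1_pow_x2_def) (rule finite_subset[of _ "{1, 2}"]; auto)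

(* The lists counted by pcoeff: f ! j is the variable taken from the j-th factor of p\<^sub>\<lambda>. *)
definition pterms :: "nat list \<Rightarrow> (nat \<Rightarrow> nat) \<Rightarrow> nat list set" where
  "pterms la a = {f. length f = length la \<and> (\<forall>i\<in>set f. 1 \<le> i) \<and>
      (\<forall>k\<ge>1. (\<Sum>j\<in>{j. j < length la \<and> f ! j = k}. la ! j) = a k)}"

lemma pcoeff_eq_card_pterms: "pcoeff la a = card (pterms la a)"
  unfolding pcoeff_def pterms_def ..

lemma pterms_sum_eq:
  "f \<in> pterms la a \<Longrightarrow> 1 \<le> k \<Longrightarrow> (\<Sum>j\<in>{j. j < length la \<and> f ! j = k}. la ! j) = a k"
  unfolding pterms_def by blast

lemma set_pterms:
  assumes "0 \<notin> set la" and f: "f \<in> pterms la a"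
  shows "set f = {k. 1 \<le> k \<and> a k \<noteq> 0}"
proof (intro set_eqI iffI)
  fix k assume "k \<in> set f"
  then obtain j where j: "j < length la" "f ! j = k"
    using f by (auto simp: pterms_def in_set_conv_nth)
  have k1: "1 \<le> k" using \<open>k \<in> set f\<close> f by (auto simp: pterms_def)
  have "0 < la ! j" using assms(1) j(1) by (metis gr0I nth_mem)
  also have "la ! j \<le> (\<Sum>j\<in>{j. j < length la \<and> f ! j = k}. la ! j)"
    using j by (intro member_le_sum) auto
  finally show "k \<in> {k. 1 \<le> k \<and> a k \<noteq> 0}" using pterms_sum_eq[OF f k1] k1 by simp
next
  fix k assume k: "k \<in> {k. 1 \<le> k \<and> a k \<noteq> 0}"
  have "{j. j < length la \<and> f ! j = k} \<noteq> {}"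
  proof
    assume empty: "{j. j < length la \<and> f ! j = k} = {}"
    show False using pterms_sum_eq[OF f, of k, unfolded empty] k by simp
  qed
  then show "k \<in> set f" using f by (auto simp: pterms_def in_set_conv_nth)
qed

lemma sum_list_pterms:
  assumes f: "f \<in> pterms la a"
  shows "sum_list la = (\<Sum>k\<in>set f. a k)"
proof -
  have len: "length f = length la" and pos: "\<forall>k\<in>set f. 1 \<le> k"
    using f by (auto simp: pterms_def)
  have "sum_list la = (\<Sum>j<length la. la ! j)"
    by (simp add: sum_list_sum_nth atLeast0LessThan)
  also have "\<dots> = (\<Sum>k\<in>set f. \<Sum>j\<in>{j. j < length la \<and> f ! j = k}. la ! j)"
    using sum.group[OF finite_lessThan finite_set, of "(!) f" "length la" f "(!) la"] len
    by (simp add: image_subset_iff)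
  also have "\<dots> = (\<Sum>k\<in>set f. a k)"
    using pterms_sum_eq[OF f] pos by simp
  finally show ?thesis .
qed

lemma pcoeff_x1_pow:
  assumes "0 \<notin> set la" and "sum_list la = k"
  shows "pcoeff la (x1_pow k) = 1"
proof -
  let ?f = "replicate (length la) (1::nat)"
  have "pterms la (x1_pow k) = {?f}"
  proof (intro equalityI subsetI)
    fix f assume f: "f \<in> pterms la (x1_pow k)"
    have "set f \<subseteq> {1}" using set_pterms[OF assms(1) f] by (auto simp: x1_pow_def)
    then have "replicate (length f) 1 = f" by (intro replicate_length_same) auto
    with f show "f \<in> {?f}" by (simp add: pterms_def)
  next
    have "{j. j < length la \<and> ?f ! j = i} = (if i = 1 then {..<length la} else {})" for i
      by auto
    moreover have "(\<Sum>j<length la. la ! j) = k"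
      using assms(2) by (simp add: sum_list_sum_nth atLeast0LessThan)
    ultimately show "f \<in> pterms la (x1_pow k)" if "f \<in> {?f}" for f
      using that by (simp add: pterms_def x1_pow_def)
  qed
  then show ?thesis by (simp add: pcoeff_eq_card_pterms)
qed

lemma pterms_x1_pow_x2_subset:
  assumes "0 \<notin> set la"
  shows "pterms la (x1_pow_x2 k) \<subseteq> (\<lambda>j. (replicate (length la) 1)[j := 2]) ` {..<length la}"
proof
  fix f assume f: "f \<in> pterms la (x1_pow_x2 k)"
  have set_f: "set f \<subseteq> {1, 2}" "2 \<in> set f"
    using set_pterms[OF assms f] by (auto simp: x1_pow_x2_def)
  have len: "length f = length la" using f by (simp add: pterms_def)
  let ?J = "{j. j < length la \<and> f ! j = 2}"
  have "card ?J = (\<Sum>j\<in>?J. 1)" by simp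
  also have "\<dots> \<le> (\<Sum>j\<in>?J. la ! j)"
    using assms by (intro sum_mono) (metis One_nat_def Suc_leI gr0I mem_Collect_eq nth_mem)
  also have "\<dots> = 1" using pterms_sum_eq[OF f, of 2] by (simp add: x1_pow_x2_def)
  finally have "card ?J \<le> 1" .
  moreover have "?J \<noteq> {}" using set_f(2) len by (auto simp: in_set_conv_nth)
  moreover have "card ?J = 0 \<longleftrightarrow> ?J = {}" by (intro card_0_eq) simp
  ultimately have "card ?J = 1" by linarith
  then obtain j0 where J: "?J = {j0}" by (rule card_1_singletonE)
  have "f = (replicate (length la) 1)[j0 := 2]"
  proof (rule nth_equalityI)
    fix i assume i: "i < length f"
    then have "f ! i \<in> {1, 2}" using set_f(1) nth_mem by blast
    moreover have "i \<in> ?J \<longleftrightarrow> i = j0" using J by simp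
    then have "f ! i = 2 \<longleftrightarrow> i = j0" using i len by simp
    ultimately show "f ! i = (replicate (length la) 1)[j0 := 2] ! i"
      using i len by auto
  qed (simp add: len)
  moreover have "j0 < length la" using J by auto
  ultimately show "f \<in> (\<lambda>j. (replicate (length la) 1)[j := 2]) ` {..<length la}" by blast
qed

lemma length_le_sum_list_pos:
  fixes la :: "nat list"
  assumes "0 \<notin> set la"
  shows "length la \<le> sum_list la"
  using assms by (induction la) (auto simp: Suc_le_eq)

lemma pcoeff_x1_pow_x2_le:
  assumes "0 \<notin> set la"
  shows "pcoeff la (x1_pow_x2 k) \<le> Suc k * pcoeff la (x1_pow (Suc k))"
proof (cases "pterms la (x1_pow_x2 k) = {}")
  case False
  then obtain f where f: "f \<in> pterms la (x1_pow_x2 k)" by blast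
  have "sum_list la = (\<Sum>i\<in>set f. x1_pow_x2 k i)" by (rule sum_list_pterms[OF f])
  also have "\<dots> = (\<Sum>i\<in>{1, 2}. x1_pow_x2 k i)"
    using set_pterms[OF assms f] by (intro sum.mono_neutral_left) (auto simp: x1_pow_x2_def)
  finally have sum: "sum_list la = Suc k" by (simp add: x1_pow_x2_def)
  have "pcoeff la (x1_pow_x2 k) \<le>
      card ((\<lambda>j. (replicate (length la) (1::nat))[j := 2]) ` {..<length la})"
    unfolding pcoeff_eq_card_pterms by (intro card_mono pterms_x1_pow_x2_subset assms) simp
  also have "\<dots> \<le> length la" using card_image_le[of "{..<length la}"] by simp
  also have "\<dots> \<le> Suc k" using length_le_sum_list_pos[OF assms] sum by simp
  finally show ?thesis using pcoeff_x1_pow[OF assms sum] by simp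
qed (simp add: pcoeff_eq_card_pterms)

lemma p_positive_coeff_le:
  fixes r :: nat
  assumes "p_positive F"
    and "a 0 = 0" "finite {k. a k \<noteq> 0}" "b 0 = 0" "finite {k. b k \<noteq> 0}"
    and le: "\<And>la. is_partition la \<Longrightarrow> pcoeff la a \<le> r * pcoeff la b"
  shows "F a \<le> r * F b"
proof -
  obtain c :: "nat list \<Rightarrow> real" where part: "\<And>la. c la \<noteq> 0 \<Longrightarrow> is_partition la"
    and nonneg: "\<And>la. 0 \<le> c la"
    and expand: "\<And>a. a 0 = 0 \<and> finite {k. a k \<noteq> 0} \<Longrightarrow>
         real (F a) = (\<Sum>la\<in>{la. c la \<noteq> 0}. c la * real (pcoeff la a))"
    using assms(1) unfolding p_positive_def by blast
  have "real (F a) = (\<Sum>la\<in>{la. c la \<noteq> 0}. c la * real (pcoeff la a))"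
    using assms(2,3) by (intro expand) simp
  also have "\<dots> \<le> (\<Sum>la\<in>{la. c la \<noteq> 0}. c la * (real r * real (pcoeff la b)))"
    using part nonneg le by (intro sum_mono mult_left_mono) (simp_all flip: of_nat_mult)
  also have "\<dots> = real r * (\<Sum>la\<in>{la. c la \<noteq> 0}. c la * real (pcoeff la b))"
    by (simp add: sum_distrib_left algebra_simps)
  also have "\<dots> = real r * real (F b)"
    using assms(4,5) by (subst expand) simp_all
  finally show ?thesis by (simp flip: of_nat_mult)
qed

section \<open>Marked fillings and ribbons\<close>

lemma marked_fillingI:
  assumes "\<And>b. b \<in> D \<Longrightarrow> 1 \<le> T b" "\<And>b. b \<notin> D \<Longrightarrow> T b = 0"
    and "\<And>i j. (i, j) \<in> D \<Longrightarrow> (i, j + 1) \<in> D \<Longrightarrow> T (i, j) \<le> T (i, j + 1)"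
    and "\<And>i j. (i, j) \<in> D \<Longrightarrow> (i + 1, j) \<in> D \<Longrightarrow> T (i, j) \<le> T (i + 1, j)"
    and col: "\<And>i i' j. (i, j) \<in> D \<Longrightarrow> (i', j) \<in> D \<Longrightarrow> i < i' \<Longrightarrow> T (i, j) = T (i', j) \<Longrightarrow>
      odd (T (i, j))"
    and row: "\<And>i j j'. (i, j) \<in> D \<Longrightarrow> (i, j') \<in> D \<Longrightarrow> j < j' \<Longrightarrow> T (i, j) = T (i, j') \<Longrightarrow>
      even (T (i, j))"
  shows "marked_filling D T"
  unfolding marked_filling_def
proof (intro conjI allI impI ballI)
  fix i i' j assume "(i, j) \<in> D \<and> (i', j) \<in> D \<and> i \<noteq> i' \<and> even (T (i, j))"
  then show "T (i, j) \<noteq> T (i', j)"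
    using col[of i j i'] col[of i' j i] by (cases "i < i'") auto
next
  fix i j j' assume "(i, j) \<in> D \<and> (i, j') \<in> D \<and> j \<noteq> j' \<and> odd (T (i, j))"
  then show "T (i, j) \<noteq> T (i, j')"
    using row[of i j j'] row[of i j' j] by (cases "j < j'") auto
qed (use assms in auto)

lemma marked_fillingD:
  assumes "marked_filling D T"
  shows "b \<in> D \<Longrightarrow> 1 \<le> T b" "b \<notin> D \<Longrightarrow> T b = 0"
    and "(i, j) \<in> D \<Longrightarrow> (i, j + 1) \<in> D \<Longrightarrow> T (i, j) \<le> T (i, j + 1)"
    and "(i, j) \<in> D \<Longrightarrow> (i + 1, j) \<in> D \<Longrightarrow> T (i, j) \<le> T (i + 1, j)"
    and "(i, j) \<in> D \<Longrightarrow> (i', j) \<in> D \<Longrightarrow> i \<noteq> i' \<Longrightarrow> even (T (i, j)) \<Longrightarrow> T (i, j) \<noteq> T (i', j)"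
    and "(i, j) \<in> D \<Longrightarrow> (i, j') \<in> D \<Longrightarrow> j \<noteq> j' \<Longrightarrow> odd (T (i, j)) \<Longrightarrow> T (i, j) \<noteq> T (i, j')"
  using assms unfolding marked_filling_def by blast+

lemma letter_eq_1_iff: "letter v = 1 \<longleftrightarrow> v = 1 \<or> v = 2"
  unfolding letter_def by presburger

lemma letter_ge1_iff: "1 \<le> letter v \<longleftrightarrow> 1 \<le> v"
  unfolding letter_def by auto

lemma letter_in_content_support:
  assumes "finite D" "b \<in> D" "1 \<le> T b" "\<forall>k\<ge>1. content D T k = a k"
  shows "a (letter (T b)) \<noteq> 0"
proof -
  let ?B = "{b' \<in> D. letter (T b') = letter (T b)}"
  have "b \<in> ?B" "finite ?B" using assms(1,2) by simp_all
  then have "card ?B \<noteq> 0" using card_0_eq by blast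
  then show ?thesis using assms(3,4) letter_ge1_iff by (auto simp: content_def)
qed

lemma finite_bounded_fillings:
  assumes "finite D"
  shows "finite {T. marked_filling D T \<and> (\<forall>b\<in>D. T b \<le> K)}"
proof (rule finite_subset)
  show "finite {T. \<forall>b. (b \<in> D \<longrightarrow> T b \<in> {..K}) \<and> (b \<notin> D \<longrightarrow> T b = 0)}"
    using assms by (intro finite_set_of_finite_funs) simp_all
qed (auto simp: marked_filling_def)

lemma finite_fillings_content:
  assumes "finite D" "finite {k. a k \<noteq> 0}"
  shows "finite {T. marked_filling D T \<and> (\<forall>k\<ge>1. content D T k = a k)}"
proof (rule finite_subset)
  let ?K = "Max (insert 0 {k. a k \<noteq> 0})"
  show "{T. marked_filling D T \<and> (\<forall>k\<ge>1. content D T k = a k)} \<subseteq>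
      {T. marked_filling D T \<and> (\<forall>b\<in>D. T b \<le> 2 * ?K)}"
  proof safe
    fix T b assume T: "marked_filling D T" and content: "\<forall>k\<ge>1. content D T k = a k" and b: "b \<in> D"
    have "a (letter (T b)) \<noteq> 0"
      using letter_in_content_support[OF assms(1) b marked_fillingD(1)[OF T b] content] .
    then have "letter (T b) \<le> ?K" using assms(2) by (intro Max_ge) auto
    then show "T b \<le> 2 * ?K" by (simp add: letter_def)
  qed
qed (rule finite_bounded_fillings[OF assms(1)])

definition corner_boxes :: "(nat \<times> nat) set \<Rightarrow> (nat \<times> nat) set" where
  "corner_boxes D = {(i, j). (i, j) \<in> D \<and> 1 \<le> i \<and> (i - 1, j) \<in> D \<and> (i + 1, j) \<notin> D}"

lemma corners_eq_card: "corners D = card (corner_boxes D)"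
  unfolding corners_def corner_boxes_def ..

lemma composition_nth_pos: "is_composition \<alpha> \<Longrightarrow> i < length \<alpha> \<Longrightarrow> 1 \<le> \<alpha> ! i"
  unfolding is_composition_def by (metis less_one not_le nth_mem)

lemma mem_ribbon_iff:
  "(i, j) \<in> ribbon \<alpha> \<longleftrightarrow> 1 \<le> i \<and> i \<le> length \<alpha> \<and>
     ribbon_start \<alpha> i \<le> j \<and> j < ribbon_start \<alpha> i + \<alpha> ! (i - 1)"
  unfolding ribbon_def by simp

lemma finite_ribbon: "finite (ribbon \<alpha>)"
proof -
  have "ribbon \<alpha> = (SIGMA i:{1..length \<alpha>}. {ribbon_start \<alpha> i..<ribbon_start \<alpha> i + \<alpha> ! (i - 1)})"
    unfolding ribbon_def by auto
  then show ?thesis by simp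
qed

lemma ribbon_start_last: "ribbon_start \<alpha> (length \<alpha>) = 1"
  unfolding ribbon_start_def by simp

lemma ribbon_start_ge1: "1 \<le> ribbon_start \<alpha> i"
  unfolding ribbon_start_def by simp

lemma ribbon_start_antimono: "i \<le> i' \<Longrightarrow> ribbon_start \<alpha> i' \<le> ribbon_start \<alpha> i"
  unfolding ribbon_start_def by (intro add_left_mono sum_mono2) auto

lemma ribbon_start_step:
  assumes "i < length \<alpha>"
  shows "ribbon_start \<alpha> i = ribbon_start \<alpha> (Suc i) + (\<alpha> ! i - 1)"
proof -
  have "{i + 1..length \<alpha>} = insert (Suc i) {Suc i + 1..length \<alpha>}" using assms by auto
  then show ?thesis unfolding ribbon_start_def by simp
qed

lemma bottom_left_in_ribbon:
  assumes "is_composition \<alpha>"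
  shows "(length \<alpha>, 1) \<in> ribbon \<alpha>"
proof -
  have "0 < length \<alpha>" using assms by (simp add: is_composition_def)
  then show ?thesis
    using composition_nth_pos[OF assms, of "length \<alpha> - 1"]
      by (simp add: mem_ribbon_iff ribbon_start_last Suc_le_eq)
qed

lemma ribbon_below_row_start:
  assumes "is_composition \<alpha>" "1 \<le> i" "i < length \<alpha>"
  shows "(i + 1, ribbon_start \<alpha> i) \<in> ribbon \<alpha>"
  using ribbon_start_step[OF assms(3)] composition_nth_pos[OF assms(1,3)] assms(2,3)
  by (simp add: mem_ribbon_iff)

lemma ribbon_le_start_above:
  assumes "(i, j) \<in> ribbon \<alpha>" "2 \<le> i"
  shows "j \<le> ribbon_start \<alpha> (i - 1)"
  using assms ribbon_start_step[of "i - 1" \<alpha>] by (auto simp: mem_ribbon_iff)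

lemma ribbon_column_upper:
  assumes "(i, j) \<in> ribbon \<alpha>" "(i', j) \<in> ribbon \<alpha>" "i < i'"
  shows "j = ribbon_start \<alpha> i \<and> i < length \<alpha>"
proof -
  have "j \<le> ribbon_start \<alpha> (i' - 1)"
    using assms by (intro ribbon_le_start_above) (auto simp: mem_ribbon_iff)
  also have "\<dots> \<le> ribbon_start \<alpha> i" using assms(3) by (intro ribbon_start_antimono) simp
  finally show ?thesis using assms by (auto simp: mem_ribbon_iff)
qed

lemma ribbon_column_convex:
  assumes "is_composition \<alpha>" "(i, j) \<in> ribbon \<alpha>" "(i', j) \<in> ribbon \<alpha>" "i \<le> k" "k \<le> i'"
  shows "(k, j) \<in> ribbon \<alpha>"
proof (cases "k = i \<or> k = i'")
  case False
  then have k: "i < k" "k < i'" using assms(4,5) by auto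
  have j: "j = ribbon_start \<alpha> i" using ribbon_column_upper assms(2,3) k by fastforce
  have "j \<le> ribbon_start \<alpha> (i' - 1)"
    using assms(3) k by (intro ribbon_le_start_above) auto
  also have "\<dots> \<le> ribbon_start \<alpha> (k - 1)" using k by (intro ribbon_start_antimono) simp
  also have "\<dots> = ribbon_start \<alpha> k + (\<alpha> ! (k - 1) - 1)"
    using assms(3) k ribbon_start_step[of "k - 1" \<alpha>] by (auto simp: mem_ribbon_iff)
  moreover have "k - 1 < length \<alpha>" using assms(3) k by (auto simp: mem_ribbon_iff)
  then have "1 \<le> \<alpha> ! (k - 1)" by (rule composition_nth_pos[OF assms(1)])
  ultimately have "j < ribbon_start \<alpha> k + \<alpha> ! (k - 1)" by linarith
  moreover have "ribbon_start \<alpha> k \<le> j" using j k by (simp add: ribbon_start_antimono)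
  moreover have "1 \<le> i" "i' \<le> length \<alpha>" using assms(2,3) by (simp_all add: mem_ribbon_iff)
  ultimately show ?thesis using k by (simp add: mem_ribbon_iff)
qed (use assms(2,3) in blast)

definition upper_row_start :: "nat list \<Rightarrow> nat \<times> nat \<Rightarrow> bool" where
  "upper_row_start \<alpha> b \<longleftrightarrow> fst b < length \<alpha> \<and> snd b = ribbon_start \<alpha> (fst b)"

lemma upper_row_start_iff_below:
  assumes "is_composition \<alpha>" "(i, j) \<in> ribbon \<alpha>"
  shows "upper_row_start \<alpha> (i, j) \<longleftrightarrow> (i + 1, j) \<in> ribbon \<alpha>"
proof
  assume "upper_row_start \<alpha> (i, j)"
  moreover have "1 \<le> i" using assms(2) by (simp add: mem_ribbon_iff)
  ultimately show "(i + 1, j) \<in> ribbon \<alpha>"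
    using ribbon_below_row_start[OF assms(1)] by (simp add: upper_row_start_def)
next
  assume "(i + 1, j) \<in> ribbon \<alpha>"
  then show "upper_row_start \<alpha> (i, j)"
    using ribbon_column_upper[OF assms(2)] by (simp add: upper_row_start_def)
qed

lemma corner_boxD:
  assumes "is_composition \<alpha>" "(i, j) \<in> corner_boxes (ribbon \<alpha>)"
  shows "(i, j) \<in> ribbon \<alpha>" "(i - 1, j) \<in> ribbon \<alpha>" "(i + 1, j) \<notin> ribbon \<alpha>" "2 \<le> i"
    and "(i, j + 1) \<notin> ribbon \<alpha>" "upper_row_start \<alpha> (i - 1, j)" "\<not> upper_row_start \<alpha> (i, j)"
proof -
  show D: "(i, j) \<in> ribbon \<alpha>" "(i - 1, j) \<in> ribbon \<alpha>" "(i + 1, j) \<notin> ribbon \<alpha>"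
    using assms(2) by (auto simp: corner_boxes_def)
  show i: "2 \<le> i" using D(2) assms(2) by (auto simp: corner_boxes_def mem_ribbon_iff)
  show upper: "upper_row_start \<alpha> (i - 1, j)"
    using upper_row_start_iff_below[OF assms(1) D(2)] D(1) i by simp
  show "\<not> upper_row_start \<alpha> (i, j)" using upper_row_start_iff_below[OF assms(1) D(1)] D(3) by simp
  show "(i, j + 1) \<notin> ribbon \<alpha>"
  proof
    assume "(i, j + 1) \<in> ribbon \<alpha>"
    then have "j + 1 \<le> ribbon_start \<alpha> (i - 1)" using i by (rule ribbon_le_start_above)
    then show False using upper by (simp add: upper_row_start_def)
  qed
qed

section \<open>Fillings using only the letters 1' and 1\<close>

definition base_filling :: "nat list \<Rightarrow> nat \<times> nat \<Rightarrow> nat" where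
  "base_filling \<alpha> b = (if b \<notin> ribbon \<alpha> then 0 else if upper_row_start \<alpha> b then 1 else 2)"

lemma single_letter_filling_apply:
  assumes comp: "is_composition \<alpha>" and T: "marked_filling (ribbon \<alpha>) T"
    and letters: "\<forall>b\<in>ribbon \<alpha>. letter (T b) = 1"
    and ij: "(i, j) \<in> ribbon \<alpha>" "(i, j) \<noteq> (length \<alpha>, 1)"
  shows "T (i, j) = (if upper_row_start \<alpha> (i, j) then 1 else 2)"
proof -
  have range: "T b = 1 \<or> T b = 2" if "b \<in> ribbon \<alpha>" for b
    using letters that letter_eq_1_iff by blast
  show ?thesis
  proof (cases "upper_row_start \<alpha> (i, j)")
    case True
    then have below: "(i + 1, j) \<in> ribbon \<alpha>" using upper_row_start_iff_below comp ij(1) by blast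
    have "T (i, j) \<noteq> 2"
    proof
      assume "T (i, j) = 2"
      moreover have "T (i, j) \<le> T (i + 1, j)" by (rule marked_fillingD(4)[OF T ij(1) below])
      moreover have "even (T (i, j)) \<Longrightarrow> T (i, j) \<noteq> T (i + 1, j)"
        by (rule marked_fillingD(5)[OF T ij(1) below]) simp
      ultimately show False using range[OF below] by auto
    qed
    then show ?thesis using True range[OF ij(1)] by simp
  next
    case False
    have "j \<noteq> ribbon_start \<alpha> i"
      using False ij ribbon_start_last[of \<alpha>] by (auto simp: upper_row_start_def mem_ribbon_iff)
    then have left: "(i, j - 1) \<in> ribbon \<alpha>" "0 < j"
      using ij(1) ribbon_start_ge1[of \<alpha> i] by (auto simp: mem_ribbon_iff)
    have "T (i, j) \<noteq> 1"
    proof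
      assume "T (i, j) = 1"
      moreover have "T (i, j - 1) \<le> T (i, j)"
        using marked_fillingD(3)[OF T left(1)] ij(1) by (simp add: left(2))
      moreover have "odd (T (i, j - 1)) \<Longrightarrow> T (i, j - 1) \<noteq> T (i, j)"
        using marked_fillingD(6)[OF T left(1) ij(1)] left(2) by simp
      ultimately show False using marked_fillingD(1)[OF T left(1)] by simp
    qed
    then show ?thesis using False range[OF ij(1)] by simp
  qed
qed

lemma single_letter_filling:
  assumes comp: "is_composition \<alpha>" and T: "marked_filling (ribbon \<alpha>) T"
    and letters: "\<forall>b\<in>ribbon \<alpha>. letter (T b) = 1"
  shows "T = (base_filling \<alpha>)((length \<alpha>, 1) := T (length \<alpha>, 1))"
proof
  fix b
  show "T b = ((base_filling \<alpha>)((length \<alpha>, 1) := T (length \<alpha>, 1))) b"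
  proof (cases "b \<in> ribbon \<alpha> \<and> b \<noteq> (length \<alpha>, 1)")
    case False
    then show ?thesis using marked_fillingD(2)[OF T] by (auto simp: base_filling_def)
  next
    assume box: "b \<in> ribbon \<alpha> \<and> b \<noteq> (length \<alpha>, 1)"
    obtain i j where b: "b = (i, j)" by fastforce
    have "((base_filling \<alpha>)((length \<alpha>, 1) := T (length \<alpha>, 1))) (i, j) = base_filling \<alpha> (i, j)"
      using box b by auto
    also have "\<dots> = T (i, j)"
      using single_letter_filling_apply[OF comp T letters] box b by (simp add: base_filling_def)
    finally show ?thesis unfolding b by (rule sym)
  qed
qed

lemma rcoeff_x1_pow_le:
  assumes "is_composition \<alpha>"
  shows "rcoeff (ribbon \<alpha>) (x1_pow (card (ribbon \<alpha>))) \<le> 2"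
proof -
  let ?F = "{T. marked_filling (ribbon \<alpha>) T \<and>
    (\<forall>k\<ge>1. content (ribbon \<alpha>) T k = x1_pow (card (ribbon \<alpha>)) k)}"
  have "?F \<subseteq> (\<lambda>x. (base_filling \<alpha>)((length \<alpha>, 1) := x)) ` {1, 2}"
  proof
    fix T assume "T \<in> ?F"
    then have T: "marked_filling (ribbon \<alpha>) T"
      and content: "\<forall>k\<ge>1. content (ribbon \<alpha>) T k = x1_pow (card (ribbon \<alpha>)) k" by simp_all
    have letters: "letter (T b) = 1" if "b \<in> ribbon \<alpha>" for b
      using letter_in_content_support[OF finite_ribbon that marked_fillingD(1)[OF T that] content]
      by (simp add: x1_pow_def split: if_splits)
    have "T (length \<alpha>, 1) \<in> {1, 2}"
      using letters bottom_left_in_ribbon[OF assms] letter_eq_1_iff by blast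
    moreover have "T = (base_filling \<alpha>)((length \<alpha>, 1) := T (length \<alpha>, 1))"
      using single_letter_filling[OF assms T] letters by blast
    ultimately show "T \<in> (\<lambda>x. (base_filling \<alpha>)((length \<alpha>, 1) := x)) ` {1, 2}"
      by (rule rev_image_eqI)
  qed
  then have "card ?F \<le> card ((\<lambda>x. (base_filling \<alpha>)((length \<alpha>, 1) := x)) ` {1::nat, 2})"
    by (intro card_mono) simp_all
  also have "\<dots> \<le> card {1::nat, 2}" by (rule card_image_le) simp
  finally have "card ?F \<le> 2" by simp
  then show ?thesis unfolding rcoeff_def .
qed

section \<open>Fillings with a single letter 2' or 2 in a corner\<close>

(* u \<in> {3, 4} encodes 2' or 2 in the corner m; v, w \<in> {1, 2} encode 1' or 1. *)
definition corner_filling :: "nat list \<Rightarrow> nat \<times> nat \<Rightarrow> nat \<Rightarrow> nat \<Rightarrow> nat \<Rightarrow> nat \<times> nat \<Rightarrow> nat" where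
  "corner_filling \<alpha> m u v w b =
    (if b \<notin> ribbon \<alpha> then 0 else if b = m then u else if b = (fst m - 1, snd m) then v
     else if b = (length \<alpha>, 1) then w else if upper_row_start \<alpha> b then 1 else 2)"

context
  fixes \<alpha> :: "nat list" and i j u v w :: nat
  assumes comp: "is_composition \<alpha>" and corner: "(i, j) \<in> corner_boxes (ribbon \<alpha>)"
    and u: "u \<in> {3, 4}" and v: "v \<in> {1, 2}" and w: "w \<in> {1, 2}"
begin

lemma corner_filling_corner: "corner_filling \<alpha> (i, j) u v w (i, j) = u"
  using corner_boxD(1)[OF comp corner] by (simp add: corner_filling_def)

lemma corner_filling_above_corner: "corner_filling \<alpha> (i, j) u v w (i - 1, j) = v"
proof -
  have "i - 1 \<noteq> i" using corner_boxD(4)[OF comp corner] by simp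
  then show ?thesis using corner_boxD(2)[OF comp corner] by (simp add: corner_filling_def)
qed

lemma corner_filling_other:
  assumes "b \<in> ribbon \<alpha>" "b \<notin> {(i, j), (i - 1, j), (length \<alpha>, 1)}"
  shows "corner_filling \<alpha> (i, j) u v w b = (if upper_row_start \<alpha> b then 1 else 2)"
proof -
  have "b \<noteq> (i, j)" "b \<noteq> (i - 1, j)" "b \<noteq> (length \<alpha>, 1)" using assms(2) by simp_all
  then show ?thesis unfolding corner_filling_def fst_conv snd_conv using assms(1)
    by (simp only: if_False not_True_eq_False simp_thms)
qed

lemma above_corner_neq: "(i - 1, j) \<noteq> (i, j)" "(i - 1, j) \<noteq> (length \<alpha>, 1)"
  using corner_boxD(4,6)[OF comp corner] by (auto simp: upper_row_start_def)

lemma corner_filling_cases: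
  assumes "b \<in> ribbon \<alpha>"
  obtains "b = (i, j)" "corner_filling \<alpha> (i, j) u v w b = u"
  | "b = (i - 1, j)" "corner_filling \<alpha> (i, j) u v w b = v"
  | "b = (length \<alpha>, 1)" "b \<noteq> (i, j)" "corner_filling \<alpha> (i, j) u v w b = w"
  | "b \<notin> {(i, j), (i - 1, j), (length \<alpha>, 1)}"
    "corner_filling \<alpha> (i, j) u v w b = (if upper_row_start \<alpha> b then 1 else 2)"
proof -
  consider "b = (i, j)" | "b = (i - 1, j)" | "b = (length \<alpha>, 1)" "b \<noteq> (i, j)"
    | "b \<notin> {(i, j), (i - 1, j), (length \<alpha>, 1)}" by blast
  then show thesis
  proof cases
    case 3
    then have "corner_filling \<alpha> (i, j) u v w b = w"
      using assms above_corner_neq(2)[symmetric] unfolding corner_filling_def fst_conv snd_conv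
      by (simp only: if_False if_True simp_thms)
    with 3 that(3) show thesis by blast
  qed (use that corner_filling_corner corner_filling_above_corner corner_filling_other[OF assms]
    in auto)
qed

lemma corner_filling_bottom_left:
  "(i, j) \<noteq> (length \<alpha>, 1) \<Longrightarrow> corner_filling \<alpha> (i, j) u v w (length \<alpha>, 1) = w"
  using bottom_left_in_ribbon[OF comp] by (rule corner_filling_cases) (use above_corner_neq in auto)

lemma corner_filling_upper_row_start:
  assumes "b \<in> ribbon \<alpha>" "upper_row_start \<alpha> b" "b \<noteq> (i - 1, j)"
  shows "corner_filling \<alpha> (i, j) u v w b = 1"
proof -
  have "b \<noteq> (i, j)" "b \<noteq> (length \<alpha>, 1)"
    using assms(2) corner_boxD(7)[OF comp corner] by (auto simp: upper_row_start_def)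
  then show ?thesis using assms corner_filling_other by simp
qed

lemma corner_filling_off_corner:
  "b \<in> ribbon \<alpha> \<Longrightarrow> b \<noteq> (i, j) \<Longrightarrow> corner_filling \<alpha> (i, j) u v w b \<in> {v, w, 1, 2}"
  by (erule corner_filling_cases) simp_all

lemma corner_filling_range: "b \<in> ribbon \<alpha> \<Longrightarrow> corner_filling \<alpha> (i, j) u v w b \<in> {1, 2, 3, 4}"
  using corner_filling_off_corner[of b] corner_filling_corner u v w by (cases "b = (i, j)") auto

lemma corner_filling_ge3_iff:
  "b \<in> ribbon \<alpha> \<Longrightarrow> 3 \<le> corner_filling \<alpha> (i, j) u v w b \<longleftrightarrow> b = (i, j)"
  using corner_filling_off_corner[of b] corner_filling_corner u v w by (cases "b = (i, j)") auto

lemma corner_filling_eq1_row_start: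
  assumes "b \<in> ribbon \<alpha>" "corner_filling \<alpha> (i, j) u v w b = 1"
  shows "snd b = ribbon_start \<alpha> (fst b)"
  using assms(1)
proof (cases rule: corner_filling_cases)
  case 1
  then show ?thesis using assms(2) u by simp
next
  case 2
  then show ?thesis using corner_boxD(6)[OF comp corner] by (simp add: upper_row_start_def)
next
  case 3
  then show ?thesis using ribbon_start_last[of \<alpha>] by simp
next
  case 4
  then have "upper_row_start \<alpha> b" using assms(2) by (metis numeral_eq_one_iff semiring_norm(85))
  then show ?thesis by (simp add: upper_row_start_def)
qed

lemma corner_filling_row_mono:
  assumes "(i', j') \<in> ribbon \<alpha>" "(i', j' + 1) \<in> ribbon \<alpha>"
  shows "corner_filling \<alpha> (i, j) u v w (i', j') \<le> corner_filling \<alpha> (i, j) u v w (i', j' + 1)"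
proof -
  note c = corner_boxD[OF comp corner]
  have "(i', j') \<noteq> (i, j)" using c(5) assms(2) by auto
  then have le2: "corner_filling \<alpha> (i, j) u v w (i', j') \<le> 2"
    using corner_filling_range[OF assms(1)] corner_filling_ge3_iff[OF assms(1)] by auto
  have "1 \<le> j'" using assms(1) ribbon_start_ge1[of \<alpha> i'] by (simp add: mem_ribbon_iff)
  moreover have "\<not> upper_row_start \<alpha> (i', j' + 1)"
    using assms(1) by (simp add: upper_row_start_def mem_ribbon_iff)
  ultimately have "2 \<le> corner_filling \<alpha> (i, j) u v w (i', j' + 1)"
    using c(6) u by (cases rule: corner_filling_cases[OF assms(2)]) auto
  with le2 show ?thesis by linarith
qed

lemma corner_filling_col_mono:
  assumes "(i', j') \<in> ribbon \<alpha>" "(i' + 1, j') \<in> ribbon \<alpha>"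
  shows "corner_filling \<alpha> (i, j) u v w (i', j') \<le> corner_filling \<alpha> (i, j) u v w (i' + 1, j')"
proof (cases "(i', j') = (i - 1, j)")
  case True
  then have "(i' + 1, j') = (i, j)" using corner_boxD(4)[OF comp corner] by auto
  then show ?thesis using True corner_filling_corner corner_filling_above_corner u v by auto
next
  case False
  have "upper_row_start \<alpha> (i', j')" using upper_row_start_iff_below[OF comp assms(1)] assms(2)
    by simp
  then have "corner_filling \<alpha> (i, j) u v w (i', j') = 1"
    using corner_filling_upper_row_start[OF assms(1) _ False] by simp
  then show ?thesis using corner_filling_range[OF assms(2)] by auto
qed

lemma corner_filling_col_repeat_odd:
  assumes "(i1, j') \<in> ribbon \<alpha>" "(i2, j') \<in> ribbon \<alpha>" "i1 < i2"
    and "corner_filling \<alpha> (i, j) u v w (i1, j') = corner_filling \<alpha> (i, j) u v w (i2, j')"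
  shows "odd (corner_filling \<alpha> (i, j) u v w (i1, j'))"
proof (cases "(i1, j') = (i - 1, j)")
  case True
  note c = corner_boxD[OF comp corner]
  have "i2 = i"
  proof (rule ccontr)
    assume "i2 \<noteq> i"
    then have "i + 1 \<le> i2" using True assms(3) c(4) by auto
    then have "(i + 1, j) \<in> ribbon \<alpha>" using ribbon_column_convex[OF comp assms(1,2)] True by simp
    then show False using c(3) by simp
  qed
  then show ?thesis using assms(4) True corner_filling_corner corner_filling_above_corner u v
    by auto
next
  case False
  have "upper_row_start \<alpha> (i1, j')"
    using ribbon_column_upper[OF assms(1-3)] by (simp add: upper_row_start_def)
  then show ?thesis using corner_filling_upper_row_start[OF assms(1) _ False] by simp
qed

lemma corner_filling_row_repeat_even:
  assumes "(i', j1) \<in> ribbon \<alpha>" "(i', j2) \<in> ribbon \<alpha>" "j1 < j2"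
    and eq: "corner_filling \<alpha> (i, j) u v w (i', j1) = corner_filling \<alpha> (i, j) u v w (i', j2)"
  shows "even (corner_filling \<alpha> (i, j) u v w (i', j1))"
proof (rule ccontr)
  assume "odd (corner_filling \<alpha> (i, j) u v w (i', j1))"
  then have "corner_filling \<alpha> (i, j) u v w (i', j1) = 1 \<or>
      corner_filling \<alpha> (i, j) u v w (i', j1) = 3"
    using corner_filling_range[OF assms(1)] by auto
  then show False
  proof
    assume "corner_filling \<alpha> (i, j) u v w (i', j1) = 1"
    then have "j1 = ribbon_start \<alpha> i'" "j2 = ribbon_start \<alpha> i'"
      using corner_filling_eq1_row_start[OF assms(1)] corner_filling_eq1_row_start[OF assms(2)] eq
      by simp_all
    then show False using assms(3) by simp
  next
    assume "corner_filling \<alpha> (i, j) u v w (i', j1) = 3"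
    then have "(i', j1) = (i, j)" "(i', j2) = (i, j)"
      using corner_filling_ge3_iff assms(1,2) eq by force+
    then show False using assms(3) by simp
  qed
qed

lemma corner_filling_marked: "marked_filling (ribbon \<alpha>) (corner_filling \<alpha> (i, j) u v w)"
proof (rule marked_fillingI)
  show "1 \<le> corner_filling \<alpha> (i, j) u v w b" if "b \<in> ribbon \<alpha>" for b
    using corner_filling_range[OF that] by auto
  show "corner_filling \<alpha> (i, j) u v w b = 0" if "b \<notin> ribbon \<alpha>" for b
    using that by (simp add: corner_filling_def)
qed (fact corner_filling_row_mono corner_filling_col_mono
      corner_filling_col_repeat_odd corner_filling_row_repeat_even)+

lemma corner_filling_letter:
  "b \<in> ribbon \<alpha> \<Longrightarrow> letter (corner_filling \<alpha> (i, j) u v w b) = (if b = (i, j) then 2 else 1)"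
  using corner_filling_range[of b] corner_filling_ge3_iff[of b] by (auto simp: letter_def)

lemma corner_filling_content:
  assumes "1 \<le> k"
  shows "content (ribbon \<alpha>) (corner_filling \<alpha> (i, j) u v w) k = x1_pow_x2 (card (ribbon \<alpha>) - 1) k"
proof -
  have "{b \<in> ribbon \<alpha>. letter (corner_filling \<alpha> (i, j) u v w b) = k} =
      (if k = 1 then ribbon \<alpha> - {(i, j)} else if k = 2 then {(i, j)} else {})"
    using corner_boxD(1)[OF comp corner] by (auto simp: corner_filling_letter split: if_splits)
  then show ?thesis
    using assms finite_ribbon corner_boxD(1)[OF comp corner]
      by (simp add: content_def x1_pow_x2_def)
qed

end

(* A corner may be the bottom-left box itself, whose entry w is then overwritten by u;
   dropping w = 2 there keeps the parametrisation injective. *)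
definition corner_params :: "nat list \<Rightarrow> ((nat \<times> nat) \<times> nat \<times> nat \<times> nat) set" where
  "corner_params \<alpha> = corner_boxes (ribbon \<alpha>) \<times> {3, 4} \<times> {1, 2} \<times> {1, 2} -
     {(length \<alpha>, 1)} \<times> {3, 4} \<times> {1, 2} \<times> {2}"

lemma card_corner_params:
  "8 * card (corner_boxes (ribbon \<alpha>)) - 4 \<le> card (corner_params \<alpha>)"
proof -
  let ?P = "corner_boxes (ribbon \<alpha>) \<times> {3, 4::nat} \<times> {1, 2::nat} \<times> {1, 2::nat}"
  let ?B = "{(length \<alpha>, 1::nat)} \<times> {3, 4::nat} \<times> {1, 2::nat} \<times> {2::nat}"
  have "finite (corner_boxes (ribbon \<alpha>))"
    using finite_ribbon by (rule finite_subset[rotated]) (auto simp: corner_boxes_def)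
  then have "8 * card (corner_boxes (ribbon \<alpha>)) - 4 \<le> card (?P - ?B)"
    using diff_card_le_card_Diff[of ?B ?P] by (simp add: card_cartesian_product)
  then show ?thesis by (simp add: corner_params_def)
qed

lemma corner_paramsE:
  assumes "x \<in> corner_params \<alpha>"
  obtains i j u v w where "x = ((i, j), u, v, w)" "(i, j) \<in> corner_boxes (ribbon \<alpha>)"
    "u \<in> {3, 4}" "v \<in> {1, 2}" "w \<in> {1, 2}" "(i, j) = (length \<alpha>, 1) \<Longrightarrow> w = 1"
  using assms unfolding corner_params_def by fastforce

lemma corner_filling_inj:
  assumes comp: "is_composition \<alpha>"
  shows "inj_on (\<lambda>(m, u, v, w). corner_filling \<alpha> m u v w) (corner_params \<alpha>)"
proof (rule inj_onI)
  fix x y assume "x \<in> corner_params \<alpha>" "y \<in> corner_params \<alpha>"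
    and eq: "(\<lambda>(m, u, v, w). corner_filling \<alpha> m u v w) x =
      (\<lambda>(m, u, v, w). corner_filling \<alpha> m u v w) y"
  then obtain i j u v w i' j' u' v' w' where x: "x = ((i, j), u, v, w)"
    and y: "y = ((i', j'), u', v', w')"
    and params: "(i, j) \<in> corner_boxes (ribbon \<alpha>)" "u \<in> {3, 4}" "v \<in> {1, 2}" "w \<in> {1, 2}"
    and params': "(i', j') \<in> corner_boxes (ribbon \<alpha>)" "u' \<in> {3, 4}" "v' \<in> {1, 2}" "w' \<in> {1, 2}"
    and w1: "(i, j) = (length \<alpha>, 1) \<Longrightarrow> w = 1" and w1': "(i', j') = (length \<alpha>, 1) \<Longrightarrow> w' = 1"
    by (elim corner_paramsE) blast
  have eq: "corner_filling \<alpha> (i, j) u v w b = corner_filling \<alpha> (i', j') u' v' w' b" for b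
    using eq x y by simp
  have "3 \<le> corner_filling \<alpha> (i', j') u' v' w' (i, j)"
    using eq corner_filling_ge3_iff[OF comp params corner_boxD(1)[OF comp params(1)]] by simp
  then have ij: "(i, j) = (i', j')"
    using corner_filling_ge3_iff[OF comp params' corner_boxD(1)[OF comp params(1)]] by simp
  have "u = u'"
    using eq[of "(i, j)"] ij corner_filling_corner[OF comp params]
      corner_filling_corner[OF comp params'] by simp
  moreover have "v = v'"
    using eq[of "(i - 1, j)"] ij corner_filling_above_corner[OF comp params]
      corner_filling_above_corner[OF comp params'] by simp
  moreover have "w = w'"
  proof (cases "(i, j) = (length \<alpha>, 1)")
    case False
    then show ?thesis
      using eq[of "(length \<alpha>, 1)"] ij corner_filling_bottom_left[OF comp params False]
        corner_filling_bottom_left[OF comp params'] by simp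
  qed (use w1 w1' ij in simp)
  ultimately show "x = y" using x y ij by simp
qed

lemma rcoeff_x1_pow_x2_ge:
  assumes comp: "is_composition \<alpha>"
  shows "8 * card (corner_boxes (ribbon \<alpha>)) - 4 \<le>
    rcoeff (ribbon \<alpha>) (x1_pow_x2 (card (ribbon \<alpha>) - 1))"
proof -
  let ?F = "{T. marked_filling (ribbon \<alpha>) T \<and>
    (\<forall>k\<ge>1. content (ribbon \<alpha>) T k = x1_pow_x2 (card (ribbon \<alpha>) - 1) k)}"
  have "(\<lambda>(m, u, v, w). corner_filling \<alpha> m u v w) ` corner_params \<alpha> \<subseteq> ?F"
  proof
    fix T assume "T \<in> (\<lambda>(m, u, v, w). corner_filling \<alpha> m u v w) ` corner_params \<alpha>"
    then obtain x where "x \<in> corner_params \<alpha>"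
      and T: "T = (\<lambda>(m, u, v, w). corner_filling \<alpha> m u v w) x"
      by (rule imageE)
    then obtain i j u v w where "x = ((i, j), u, v, w)"
      and params: "(i, j) \<in> corner_boxes (ribbon \<alpha>)" "u \<in> {3, 4}" "v \<in> {1, 2}" "w \<in> {1, 2}"
      by (elim corner_paramsE) blast
    then show "T \<in> ?F"
      using T corner_filling_marked[OF comp params] corner_filling_content[OF comp params] by simp
  qed
  moreover have "finite ?F"
    using finite_ribbon x1_pow_x2_support(2) by (rule finite_fillings_content)
  ultimately have "card (corner_params \<alpha>) \<le> card ?F"
    using corner_filling_inj[OF comp] by (intro card_inj_on_le) simp_all
  with card_corner_params show ?thesis unfolding rcoeff_def by (rule order_trans)
qed

theorem mainTheorem15:
  fixes \<alpha> :: "nat list" and n :: nat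
  assumes "is_composition \<alpha>"
    and "n = card (ribbon \<alpha>)"
    and "\<alpha> ! 0 = 1"
    and "real (corners (ribbon \<alpha>)) > 1/2 + real n / 4"
  shows "\<not> p_positive (rcoeff (ribbon \<alpha>))"
proof
  assume positive: "p_positive (rcoeff (ribbon \<alpha>))"
  let ?r = "rcoeff (ribbon \<alpha>)"
  have "ribbon \<alpha> \<noteq> {}" using bottom_left_in_ribbon[OF assms(1)] by blast
  then obtain k where n: "n = Suc k" using assms(2) finite_ribbon not0_implies_Suc
    by (metis card_0_eq)
  have "card (ribbon \<alpha>) - 1 = k" using assms(2) n by simp
  then have "8 * corners (ribbon \<alpha>) - 4 \<le> ?r (x1_pow_x2 k)"
    using rcoeff_x1_pow_x2_ge[OF assms(1)] by (simp add: corners_eq_card)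
  also have "\<dots> \<le> n * ?r (x1_pow n)"
    using positive x1_pow_x2_support x1_pow_support
  proof (rule p_positive_coeff_le)
    show "pcoeff la (x1_pow_x2 k) \<le> n * pcoeff la (x1_pow n)" if "is_partition la" for la
      using pcoeff_x1_pow_x2_le that n by (simp add: is_partition_def)
  qed
  also have "\<dots> \<le> n * 2" using rcoeff_x1_pow_le[OF assms(1)] assms(2) by simp
  finally show False using assms(4) by linarith
qed

end
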